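(* Let $G$ and $H$ be groups with $\mathrm{Con}(G)=\mathrm{Con}(H)$. Suppose $G$ satisfies the following ping-pong conditions: there are a set $X$ with a $G$-action, subgroups $\Gamma_1,\Gamma_2$ of $G$ with $|\Gamma_1|\ge3$, $|\Gamma_2|\ge2$, and subsets $X_1,X_2\subseteq X$ with $X_2\not\subseteq X_1$, such that $\gamma_1(X_2)\subseteq X_1$ and $\gamma_2(X_1)\subseteq X_2$ for all nonidentity $\gamma_1\in\Gamma_1$, $\gamma_2\in\Gamma_2$. Then $H$ also satisfies these conditions (for some set with an $H$-action, some subgroups of $H$ and some subsets).
   Context: For an action $G\curvearrowright X$, an ordered tuple $\mathfrak{g}=(g_1,\dots,g_n)$ of elements of $G$ and a finite partition $\mathcal{E}=\{E_1,\dots,E_m\}$ of $X$, a configuration is a tuple $C=(C_0,\dots,C_n)\in\{1,\dots,m\}^{n+1}$ such that some $x\in E_{C_0}$ satisfies $g_i\cdot x\in E_{C_i}$ for $i=1,\dots,n$; the set of these is $\mathrm{Con}(\mathfrak{g},\mathcal{E};X)$. $\mathrm{Con}(G)$ is the collection $\{\mathrm{Con}(\mathfrak{g},\mathcal{E};G)\}$ over all finite tuples $\mathfrak{g}$ in $G$ and finite partitions $\mathcal{E}$ of $G$, for the action of $G$ on itself by left multiplication. *)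

theory Defs
  imports "HOL-Algebra.Group_Action"
begin

text \<open>A finite (ordered) partition of a set S: a list of nonempty, pairwise
  disjoint sets whose union is S.  The pieces E_1..E_m are Es!0 .. Es!(m-1).\<close>
definition is_fin_partition :: "'a set \<Rightarrow> 'a set list \<Rightarrow> bool" where
  "is_fin_partition S Es \<longleftrightarrow>
     (\<Union>(set Es) = S) \<and> (\<forall>i<length Es. Es ! i \<noteq> {}) \<and>
     (\<forall>i<length Es. \<forall>j<length Es. i \<noteq> j \<longrightarrow> Es ! i \<inter> Es ! j = {})"

text \<open>Con(g, E; G) for the left multiplication action of G on itself.
  Configurations are lists C of length n+1 with entries in {1..m}
  (C!0 = C_0, ..., C!n = C_n).\<close>
definition Con_tuple :: "('a, 'b) monoid_scheme \<Rightarrow> 'a list \<Rightarrow> 'a set list \<Rightarrow> nat list set" where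
  "Con_tuple G gs Es =
     {C. length C = length gs + 1 \<and> (\<forall>j<length C. 1 \<le> C ! j \<and> C ! j \<le> length Es) \<and>
         (\<exists>x\<in>carrier G. x \<in> Es ! (C ! 0 - 1) \<and>
            (\<forall>i<length gs. gs ! i \<otimes>\<^bsub>G\<^esub> x \<in> Es ! (C ! (Suc i) - 1)))}"

definition Con :: "('a, 'b) monoid_scheme \<Rightarrow> nat list set set" where
  "Con G = {Con_tuple G gs Es | gs Es. set gs \<subseteq> carrier G \<and> is_fin_partition (carrier G) Es}"

definition pingpong_witness ::
  "('a, 'b) monoid_scheme \<Rightarrow> 'x set \<Rightarrow> ('a \<Rightarrow> 'x \<Rightarrow> 'x) \<Rightarrow> bool" where
  "pingpong_witness G X \<phi> \<longleftrightarrow> group_action G X \<phi> \<and>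
     (\<exists>\<Gamma>1 \<Gamma>2 X1 X2. subgroup \<Gamma>1 G \<and> subgroup \<Gamma>2 G \<and>
        (infinite \<Gamma>1 \<or> card \<Gamma>1 \<ge> 3) \<and> (infinite \<Gamma>2 \<or> card \<Gamma>2 \<ge> 2) \<and>
        X1 \<subseteq> X \<and> X2 \<subseteq> X \<and> \<not> X2 \<subseteq> X1 \<and>
        (\<forall>\<gamma>1\<in>\<Gamma>1. \<gamma>1 \<noteq> \<one>\<^bsub>G\<^esub> \<longrightarrow> \<phi> \<gamma>1 ` X2 \<subseteq> X1) \<and>
        (\<forall>\<gamma>2\<in>\<Gamma>2. \<gamma>2 \<noteq> \<one>\<^bsub>G\<^esub> \<longrightarrow> \<phi> \<gamma>2 ` X1 \<subseteq> X2))"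

end

theory Submission
  imports Defs "HOL-Algebra.Generated_Groups"
begin

text \<open>
  The equality Con(G) = Con(H) means that for every finite colouring f of G and every tuple
  g1, ..., gn in G there are a colouring of H and a tuple in H with exactly the same set
  of local patterns (f x, f (g1 x), ..., f (gn x)). So it suffices to encode the
  ping-pong conditions into such patterns.

  Since \<Gamma>1 and \<Gamma>2 may be infinite, they are first traded for two cyclic groups. Take
  a, c \<in> \<Gamma>1 - {1} with c a \<noteq> 1, which is where |\<Gamma>1| \<ge> 3 is used, and b \<in> \<Gamma>2 - {1}.
  Then u = a b c maps X2 \<union> a X2 into a X2, u\<inverse> maps X2 \<union> c\<inverse> X2 into c\<inverse> X2, and the
  conjugate v = b u b\<inverse> does the same with b a X2 and b c\<inverse> X2: u and v form a Schottky
  pair. Colouring g \<in> G by which of these four sets and X2 contain g x0, for a point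
  x0 \<in> X2 - X1, turns the Schottky inclusions into conditions on the patterns of the
  colouring along (u, v). Transferred to H, they make two elements of H a Schottky pair for
  left translation, and iterating the Schottky inclusions shows that the cyclic groups they
  generate play ping-pong.
\<close>

section \<open>Group actions\<close>

sublocale group_action \<subseteq> group G
  using group_hom group_hom.axioms(1) by blast

lemma group_actionI:
  assumes "group G"
    and "\<And>g. g \<in> carrier G \<Longrightarrow> \<phi> g \<in> extensional E"
    and "\<And>g x. g \<in> carrier G \<Longrightarrow> x \<in> E \<Longrightarrow> \<phi> g x \<in> E"
    and "\<And>x. x \<in> E \<Longrightarrow> \<phi> \<one>\<^bsub>G\<^esub> x = x"
    and "\<And>g h x. g \<in> carrier G \<Longrightarrow> h \<in> carrier G \<Longrightarrow> x \<in> E \<Longrightarrow>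
           \<phi> (g \<otimes>\<^bsub>G\<^esub> h) x = \<phi> g (\<phi> h x)"
  shows "group_action G E \<phi>"
proof -
  interpret group G by fact
  have cancel: "\<phi> (inv\<^bsub>G\<^esub> g) (\<phi> g x) = x" if "g \<in> carrier G" "x \<in> E" for g x
    using assms(4,5) that by (metis inv_closed l_inv)
  have Bij: "\<phi> g \<in> Bij E" if g: "g \<in> carrier G" for g
  proof -
    have "bij_betw (\<phi> g) E E"
      by (rule bij_betw_byWitness[where f' = "\<phi> (inv\<^bsub>G\<^esub> g)"])
        (use assms(3) cancel[of "inv\<^bsub>G\<^esub> g"] cancel g in auto)
    then show ?thesis
      using assms(2) g unfolding Bij_def by blast
  qed
  have "\<phi> (g \<otimes>\<^bsub>G\<^esub> h) = compose E (\<phi> g) (\<phi> h)" if "g \<in> carrier G" "h \<in> carrier G" for g h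
    by (rule extensionalityI[where A = E]) (use assms that in \<open>auto simp: compose_def\<close>)
  then have "\<phi> \<in> hom G (BijGroup E)"
    using Bij by (auto simp: hom_def BijGroup_def)
  then show ?thesis
    unfolding group_action_def group_hom_def group_hom_axioms_def
    using group_BijGroup is_group by blast
qed

definition left_translation :: "('a, 'm) monoid_scheme \<Rightarrow> 'a \<Rightarrow> 'a \<Rightarrow> 'a" where
  "left_translation G g = (\<lambda>x\<in>carrier G. g \<otimes>\<^bsub>G\<^esub> x)"

lemma (in group) group_action_left_translation:
  "group_action G (carrier G) (left_translation G)"
  by (rule group_actionI[OF is_group]) (auto simp: left_translation_def m_assoc)

lemma (in group_action) act_closed: "g \<in> carrier G \<Longrightarrow> x \<in> E \<Longrightarrow> \<phi> g x \<in> E"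
  using element_image by blast

lemma (in group_action) act_one: "x \<in> E \<Longrightarrow> \<phi> \<one> x = x"
  by (metis id_eq_one restrict_apply')

lemma (in group_action) act_inv_act: "g \<in> carrier G \<Longrightarrow> x \<in> E \<Longrightarrow> \<phi> (inv g) (\<phi> g x) = x"
  using orbit_sym_aux by blast

lemma (in group_action) act_act_inv: "g \<in> carrier G \<Longrightarrow> x \<in> E \<Longrightarrow> \<phi> g (\<phi> (inv g) x) = x"
  using act_inv_act[of "inv g"] by simp

lemma (in group_action) group_action_image:
  "group_action G (Pow E) (\<lambda>g. \<lambda>A\<in>Pow E. \<phi> g ` A)"
proof (rule group_actionI)
  show "group G"
    by (rule is_group)
  show "(\<lambda>A\<in>Pow E. \<phi> \<one>\<^bsub>G\<^esub> ` A) A = A" if "A \<in> Pow E" for A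
  proof -
    have "\<phi> \<one> ` A = (\<lambda>x. x) ` A"
      by (rule image_cong) (use that act_one in auto)
    then show ?thesis
      using that by simp
  qed
  show "(\<lambda>A\<in>Pow E. \<phi> (g \<otimes>\<^bsub>G\<^esub> h) ` A) A
      = (\<lambda>A\<in>Pow E. \<phi> g ` A) ((\<lambda>A\<in>Pow E. \<phi> h ` A) A)"
    if "g \<in> carrier G" "h \<in> carrier G" "A \<in> Pow E" for g h A
  proof -
    have "\<phi> (g \<otimes> h) ` A = (\<lambda>x. \<phi> g (\<phi> h x)) ` A"
      by (rule image_cong) (use that composition_rule in auto)
    moreover have "\<phi> h ` A \<in> Pow E"
      using that act_closed by auto
    ultimately show ?thesis
      using that by (simp add: image_image)
  qed
qed (use act_closed in auto)

lemma (in group_action) inv_image_subset_iff: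
  assumes "g \<in> carrier G" "A \<subseteq> E"
  shows "\<phi> (inv g) ` A \<subseteq> B \<longleftrightarrow> (\<forall>x\<in>E. \<phi> g x \<in> A \<longrightarrow> x \<in> B)"
proof
  assume "\<phi> (inv g) ` A \<subseteq> B"
  then show "\<forall>x\<in>E. \<phi> g x \<in> A \<longrightarrow> x \<in> B"
    using assms(1) act_inv_act by force
next
  assume "\<forall>x\<in>E. \<phi> g x \<in> A \<longrightarrow> x \<in> B"
  moreover have "\<phi> (inv g) y \<in> E" if "y \<in> A" for y
    using assms that act_closed by blast
  ultimately show "\<phi> (inv g) ` A \<subseteq> B"
    using assms act_act_inv by auto
qed

lemma (in group_action) conj_image_subset:
  assumes g: "g \<in> carrier G" and h: "h \<in> carrier G" and A: "A \<subseteq> E" and "\<phi> g ` A \<subseteq> B"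
  shows "\<phi> (h \<otimes> g \<otimes> inv h) ` \<phi> h ` A \<subseteq> \<phi> h ` B"
proof (rule image_subsetI)
  fix y assume "y \<in> \<phi> h ` A"
  then obtain x where x: "x \<in> A" "y = \<phi> h x"
    by blast
  then have x_E: "x \<in> E"
    using A by blast
  have "\<phi> (h \<otimes> g \<otimes> inv h) y = \<phi> h (\<phi> g (\<phi> (inv h) (\<phi> h x)))"
    using x(2) x_E g h act_closed composition_rule by simp
  also have "\<dots> = \<phi> h (\<phi> g x)"
    using h x_E by (simp add: act_inv_act)
  finally show "\<phi> (h \<otimes> g \<otimes> inv h) y \<in> \<phi> h ` B"
    using assms(4) x(1) by auto
qed

lemma (in group_action) pow_image_subset:
  assumes "g \<in> carrier G" "A \<union> B \<subseteq> E" "\<phi> g ` (A \<union> B) \<subseteq> B"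
  shows "\<phi> (g [^] Suc n) ` A \<subseteq> B"
proof -
  have pow_B: "\<phi> (g [^] m) ` B \<subseteq> B" for m :: nat
  proof (induction m)
    case 0
    then show ?case
      using assms(2) act_one by auto
  next
    case (Suc m)
    have "\<phi> (g [^] Suc m) x = \<phi> (g [^] m) (\<phi> g x)" if "x \<in> B" for x
      using that assms composition_rule by auto
    then show ?case
      using Suc.IH assms(3) by (auto simp: image_subset_iff)
  qed
  have "\<phi> (g [^] Suc n) x = \<phi> (g [^] n) (\<phi> g x)" if "x \<in> A" for x
    using that assms composition_rule by auto
  then show ?thesis
    using pow_B[of n] assms(3) by (auto simp: image_subset_iff)
qed

lemma (in group) generate_singleton_nononeE:
  assumes "g \<in> carrier G" "\<gamma> \<in> generate G {g}" "\<gamma> \<noteq> \<one>"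
  obtains n where "\<gamma> = g [^] Suc n" | n where "\<gamma> = inv g [^] Suc n"
proof -
  obtain k :: int where k: "\<gamma> = g [^] k"
    using assms(2) generate_pow[OF assms(1)] by blast
  show thesis
  proof (cases "k < 0")
    case True
    then have "nat (- k) \<noteq> 0"
      by simp
    then obtain n where n: "nat (- k) = Suc n"
      using not0_implies_Suc by blast
    have "\<gamma> = inv (g [^] nat (- k))"
      using k True by (simp only: int_pow_def2 if_True)
    also have "\<dots> = inv g [^] nat (- k)"
      using assms(1) by (rule nat_pow_inv[symmetric])
    finally have "\<gamma> = inv g [^] nat (- k)" .
    then show thesis
      using that(2)[of n] n by (simp only:)
  next
    case False
    have "k \<noteq> 0"
    proof
      assume "k = 0"
      with k assms(3) show False
        by simp
    qed
    with False have "nat k \<noteq> 0"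
      by simp
    then obtain n where n: "nat k = Suc n"
      using not0_implies_Suc by blast
    have "\<gamma> = g [^] nat k"
      using k False by (simp only: int_pow_def2 if_False)
    then show thesis
      using that(1)[of n] n by (simp only:)
  qed
qed

lemma (in group_action) generate_image_subset:
  assumes g: "g \<in> carrier G" and E: "A \<union> B \<union> B' \<subseteq> E"
    and g_B: "\<phi> g ` (A \<union> B) \<subseteq> B" and inv_g_B': "\<phi> (inv g) ` (A \<union> B') \<subseteq> B'"
    and \<gamma>: "\<gamma> \<in> generate G {g}" "\<gamma> \<noteq> \<one>"
  shows "\<phi> \<gamma> ` A \<subseteq> B \<union> B'"
  using g \<gamma>
proof (cases rule: generate_singleton_nononeE)
  case (1 n)
  have "\<phi> (g [^] Suc n) ` A \<subseteq> B"
    using g E g_B by (intro pow_image_subset) auto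
  with 1 show ?thesis
    by blast
next
  case (2 n)
  have "\<phi> (inv g [^] Suc n) ` A \<subseteq> B'"
    using g E inv_g_B' by (intro pow_image_subset) auto
  with 2 show ?thesis
    by blast
qed

lemma (in group) generate_card_ge_2:
  assumes "g \<in> carrier G" "g \<noteq> \<one>"
  shows "infinite (generate G {g}) \<or> card (generate G {g}) \<ge> 2"
proof (cases "finite (generate G {g})")
  case True
  have "{\<one>, g} \<subseteq> generate G {g}"
    by (simp add: generate.one generate.incl)
  then have "card {\<one>, g} \<le> card (generate G {g})"
    by (rule card_mono[OF True])
  moreover have "card {\<one>, g} = 2"
    using assms(2) by simp
  ultimately show ?thesis
    by simp
qed simp

lemma (in group) generate_card_ge_3:
  assumes "g \<in> carrier G" "g \<otimes> g \<noteq> \<one>"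
  shows "infinite (generate G {g}) \<or> card (generate G {g}) \<ge> 3"
proof (cases "finite (generate G {g})")
  case True
  have "{\<one>, g, inv g} \<subseteq> generate G {g}"
    by (simp add: generate.one generate.incl generate.inv)
  then have "card {\<one>, g, inv g} \<le> card (generate G {g})"
    by (rule card_mono[OF True])
  moreover have "card {\<one>, g, inv g} = 3"
  proof -
    have "inv g \<noteq> g"
    proof
      assume "inv g = g"
      then have "g \<otimes> g = \<one>"
        using r_inv[OF assms(1)] by simp
      with assms(2) show False ..
    qed
    moreover have "g \<noteq> \<one>"
      using assms(2) by auto
    moreover have "inv g \<noteq> \<one>"
      using assms(1) \<open>g \<noteq> \<one>\<close> by simp
    ultimately show ?thesis
      by (simp add: eq_commute[of \<one>])
  qed
  ultimately show ?thesis
    by simp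
qed simp

lemma card_less_imp_not_subset:
  assumes "infinite S \<or> card F < card S" "finite F"
  shows "\<not> S \<subseteq> F"
proof
  assume "S \<subseteq> F"
  then have "finite S" "card S \<le> card F"
    using assms(2) by (auto intro: finite_subset card_mono)
  with assms(1) show False
    by simp
qed

lemma (in group) subgroup_card_ge_3E:
  assumes "subgroup \<Gamma> G" "infinite \<Gamma> \<or> card \<Gamma> \<ge> 3"
  obtains a c where "a \<in> \<Gamma>" "c \<in> \<Gamma>" "a \<noteq> \<one>" "c \<noteq> \<one>" "c \<otimes> a \<noteq> \<one>"
proof -
  have not_pair: "\<not> \<Gamma> \<subseteq> {\<one>, x}" for x
  proof (rule card_less_imp_not_subset)
    have "card {\<one>, x} \<le> 2"
      by (simp add: card_insert_if)
    then show "infinite \<Gamma> \<or> card {\<one>, x} < card \<Gamma>"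
      using assms(2) by linarith
  qed simp
  obtain a where a: "a \<in> \<Gamma>" "a \<noteq> \<one>"
    using not_pair[of \<one>] by blast
  obtain c where c: "c \<in> \<Gamma>" "c \<noteq> \<one>" "c \<noteq> inv a"
    using not_pair[of "inv a"] by blast
  have "c \<otimes> a \<noteq> \<one>"
  proof
    assume "c \<otimes> a = \<one>"
    then have "inv a = c"
      using a(1) c(1) subgroup.mem_carrier[OF assms(1)] by (intro inv_equality) auto
    with c(3) show False
      by simp
  qed
  with a c show thesis
    by (intro that)
qed

section \<open>Ping-pong\<close>

lemma pingpong_witnessI:
  assumes "group_action G X \<phi>" and "subgroup \<Gamma>1 G" "subgroup \<Gamma>2 G"
    and "infinite \<Gamma>1 \<or> card \<Gamma>1 \<ge> 3" "infinite \<Gamma>2 \<or> card \<Gamma>2 \<ge> 2"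
    and "X1 \<subseteq> X" "X2 \<subseteq> X" "\<not> X2 \<subseteq> X1"
    and "\<And>\<gamma>. \<gamma> \<in> \<Gamma>1 \<Longrightarrow> \<gamma> \<noteq> \<one>\<^bsub>G\<^esub> \<Longrightarrow> \<phi> \<gamma> ` X2 \<subseteq> X1"
    and "\<And>\<gamma>. \<gamma> \<in> \<Gamma>2 \<Longrightarrow> \<gamma> \<noteq> \<one>\<^bsub>G\<^esub> \<Longrightarrow> \<phi> \<gamma> ` X1 \<subseteq> X2"
  shows "pingpong_witness G X \<phi>"
  unfolding pingpong_witness_def using assms
  by (intro conjI exI[of _ \<Gamma>1] exI[of _ \<Gamma>2] exI[of _ X1] exI[of _ X2]) auto

lemma pingpong_witnessE:
  assumes "pingpong_witness G X \<phi>"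
  obtains \<Gamma>1 \<Gamma>2 X1 X2 where "group_action G X \<phi>" and "subgroup \<Gamma>1 G" "subgroup \<Gamma>2 G"
    and "infinite \<Gamma>1 \<or> card \<Gamma>1 \<ge> 3" "infinite \<Gamma>2 \<or> card \<Gamma>2 \<ge> 2"
    and "X1 \<subseteq> X" "X2 \<subseteq> X" "\<not> X2 \<subseteq> X1"
    and "\<And>\<gamma>. \<gamma> \<in> \<Gamma>1 \<Longrightarrow> \<gamma> \<noteq> \<one>\<^bsub>G\<^esub> \<Longrightarrow> \<phi> \<gamma> ` X2 \<subseteq> X1"
    and "\<And>\<gamma>. \<gamma> \<in> \<Gamma>2 \<Longrightarrow> \<gamma> \<noteq> \<one>\<^bsub>G\<^esub> \<Longrightarrow> \<phi> \<gamma> ` X1 \<subseteq> X2"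
  using assms unfolding pingpong_witness_def by (elim conjE exE) (metis (no_types))

lemma pingpong_witness_Pow:
  assumes "pingpong_witness G E \<phi>"
  shows "pingpong_witness G (Pow E) (\<lambda>g. \<lambda>A\<in>Pow E. \<phi> g ` A)"
proof -
  obtain \<Gamma>1 \<Gamma>2 X1 X2 where act: "group_action G E \<phi>"
    and \<Gamma>: "subgroup \<Gamma>1 G" "subgroup \<Gamma>2 G"
      "infinite \<Gamma>1 \<or> card \<Gamma>1 \<ge> 3" "infinite \<Gamma>2 \<or> card \<Gamma>2 \<ge> 2"
    and X: "X1 \<subseteq> E" "X2 \<subseteq> E" "\<not> X2 \<subseteq> X1"
    and ping: "\<And>\<gamma>. \<gamma> \<in> \<Gamma>1 \<Longrightarrow> \<gamma> \<noteq> \<one>\<^bsub>G\<^esub> \<Longrightarrow> \<phi> \<gamma> ` X2 \<subseteq> X1"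
    and pong: "\<And>\<gamma>. \<gamma> \<in> \<Gamma>2 \<Longrightarrow> \<gamma> \<noteq> \<one>\<^bsub>G\<^esub> \<Longrightarrow> \<phi> \<gamma> ` X1 \<subseteq> X2"
    using assms by (rule pingpong_witnessE) blast
  show ?thesis
  proof (rule pingpong_witnessI[OF group_action.group_action_image[OF act] \<Gamma>])
    show "(\<lambda>x. {x}) ` X1 \<subseteq> Pow E" "(\<lambda>x. {x}) ` X2 \<subseteq> Pow E"
      using X by auto
    show "\<not> (\<lambda>x. {x}) ` X2 \<subseteq> (\<lambda>x. {x}) ` X1"
      using X by auto
    show "(\<lambda>A\<in>Pow E. \<phi> \<gamma> ` A) ` (\<lambda>x. {x}) ` X2 \<subseteq> (\<lambda>x. {x}) ` X1"
      if "\<gamma> \<in> \<Gamma>1" "\<gamma> \<noteq> \<one>\<^bsub>G\<^esub>" for \<gamma>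
      using ping[OF that] X by auto
    show "(\<lambda>A\<in>Pow E. \<phi> \<gamma> ` A) ` (\<lambda>x. {x}) ` X1 \<subseteq> (\<lambda>x. {x}) ` X2"
      if "\<gamma> \<in> \<Gamma>2" "\<gamma> \<noteq> \<one>\<^bsub>G\<^esub>" for \<gamma>
      using pong[OF that] X by auto
  qed
qed

lemma (in group_action) pingpong_attracting_image:
  assumes a: "a \<in> carrier G" and b: "b \<in> carrier G" and c: "c \<in> carrier G" and X2: "X2 \<subseteq> E"
    and "\<phi> c ` X2 \<subseteq> X1" "\<phi> (c \<otimes> a) ` X2 \<subseteq> X1" "\<phi> b ` X1 \<subseteq> X2"
  shows "\<phi> (a \<otimes> b \<otimes> c) ` (X2 \<union> \<phi> a ` X2) \<subseteq> \<phi> a ` X2"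
proof (rule image_subsetI)
  fix x assume x: "x \<in> X2 \<union> \<phi> a ` X2"
  then have x_E: "x \<in> E"
    using X2 a act_closed by blast
  have "\<phi> c x \<in> X1"
  proof (cases "x \<in> X2")
    case True
    then show ?thesis
      using assms(5) by blast
  next
    case False
    then obtain y where y: "y \<in> X2" "x = \<phi> a y"
      using x by blast
    then have "\<phi> c x = \<phi> (c \<otimes> a) y"
      using X2 a c composition_rule by auto
    then show ?thesis
      using assms(6) y(1) by auto
  qed
  then have "\<phi> b (\<phi> c x) \<in> X2"
    using assms(7) by blast
  moreover have "\<phi> (a \<otimes> b \<otimes> c) x = \<phi> a (\<phi> b (\<phi> c x))"
    using x_E a b c act_closed composition_rule by simp
  ultimately show "\<phi> (a \<otimes> b \<otimes> c) x \<in> \<phi> a ` X2"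
    by simp
qed

section \<open>Schottky colourings\<close>

datatype schottky_piece = U_plus | U_minus | V_plus | V_minus | Base

instance schottky_piece :: finite
proof
  have "UNIV = {U_plus, U_minus, V_plus, V_minus, Base}"
  proof (rule UNIV_eq_I)
    show "k \<in> {U_plus, U_minus, V_plus, V_minus, Base}" for k
      by (cases k) auto
  qed
  then show "finite (UNIV :: schottky_piece set)"
    by (metis finite.emptyI finite.insertI)
qed

text \<open>
  A colour is the set of pieces containing a point. Writing U+, U-, V+, V-, B for the
  points whose colour contains U_plus, U_minus, V_plus, V_minus, Base, a Schottky colouring
  expresses
    u (V+ \<union> V- \<union> B \<union> U+) \<subseteq> U+,   u\<inverse> (V+ \<union> V- \<union> B \<union> U-) \<subseteq> U-,
    v (U+ \<union> U- \<union> V+) \<subseteq> V+,   v\<inverse> (U+ \<union> U- \<union> V-) \<subseteq> V-,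
  and that B is not contained in U+ \<union> U-. The conditions on u\<inverse> and v\<inverse> are stated
  through x and u x, v x, so that only the colours of x, u x and v x occur.
\<close>

definition schottky_step ::
  "schottky_piece set \<Rightarrow> schottky_piece set \<Rightarrow> schottky_piece set \<Rightarrow> bool" where
  "schottky_step K Ku Kv \<longleftrightarrow>
     (K \<inter> {V_plus, V_minus, Base, U_plus} \<noteq> {} \<longrightarrow> U_plus \<in> Ku) \<and>
     (Ku \<inter> {V_plus, V_minus, Base, U_minus} \<noteq> {} \<longrightarrow> U_minus \<in> K) \<and>
     (K \<inter> {U_plus, U_minus, V_plus} \<noteq> {} \<longrightarrow> V_plus \<in> Kv) \<and>
     (Kv \<inter> {U_plus, U_minus, V_minus} \<noteq> {} \<longrightarrow> V_minus \<in> K)"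

definition schottky_base :: "schottky_piece set \<Rightarrow> bool" where
  "schottky_base K \<longleftrightarrow> Base \<in> K \<and> U_plus \<notin> K \<and> U_minus \<notin> K"

definition schottky_colouring ::
  "'x set \<Rightarrow> ('a \<Rightarrow> 'x \<Rightarrow> 'x) \<Rightarrow> 'a \<Rightarrow> 'a \<Rightarrow> ('x \<Rightarrow> schottky_piece set) \<Rightarrow> bool" where
  "schottky_colouring E \<phi> u v \<kappa> \<longleftrightarrow>
     (\<forall>x\<in>E. schottky_step (\<kappa> x) (\<kappa> (\<phi> u x)) (\<kappa> (\<phi> v x))) \<and> (\<exists>x\<in>E. schottky_base (\<kappa> x))"

lemma (in group_action) schottky_colouringI:
  assumes u: "u \<in> carrier G" and v: "v \<in> carrier G" and E: "Up \<union> Um \<union> Vp \<union> Vm \<union> B \<subseteq> E"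
    and "\<phi> u ` (Vp \<union> Vm \<union> B \<union> Up) \<subseteq> Up" "\<phi> (inv u) ` (Vp \<union> Vm \<union> B \<union> Um) \<subseteq> Um"
    and "\<phi> v ` (Up \<union> Um \<union> Vp) \<subseteq> Vp" "\<phi> (inv v) ` (Up \<union> Um \<union> Vm) \<subseteq> Vm"
    and "\<not> B \<subseteq> Up \<union> Um"
  shows "schottky_colouring E \<phi> u v (\<lambda>x. {k. x \<in> (case k of
    U_plus \<Rightarrow> Up | U_minus \<Rightarrow> Um | V_plus \<Rightarrow> Vp | V_minus \<Rightarrow> Vm | Base \<Rightarrow> B)})"
proof -
  have "\<forall>x\<in>E. \<phi> u x \<in> Vp \<union> Vm \<union> B \<union> Um \<longrightarrow> x \<in> Um"
    using assms(5) E by (subst inv_image_subset_iff[OF u, symmetric]) auto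
  moreover have "\<forall>x\<in>E. \<phi> v x \<in> Up \<union> Um \<union> Vm \<longrightarrow> x \<in> Vm"
    using assms(7) E by (subst inv_image_subset_iff[OF v, symmetric]) auto
  ultimately show ?thesis
    using assms(4,6,8) E
    unfolding schottky_colouring_def schottky_step_def schottky_base_def by auto
qed

lemma (in group_action) schottky_colouring_image_subsets:
  assumes u: "u \<in> carrier G" and v: "v \<in> carrier G" and "schottky_colouring E \<phi> u v \<kappa>"
  defines "P k \<equiv> {x \<in> E. k \<in> \<kappa> x}"
  shows "\<phi> u ` (P V_plus \<union> P V_minus \<union> P Base \<union> P U_plus) \<subseteq> P U_plus"
    and "\<phi> (inv u) ` (P V_plus \<union> P V_minus \<union> P Base \<union> P U_minus) \<subseteq> P U_minus"
    and "\<phi> v ` (P U_plus \<union> P U_minus \<union> P V_plus) \<subseteq> P V_plus"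
    and "\<phi> (inv v) ` (P U_plus \<union> P U_minus \<union> P V_minus) \<subseteq> P V_minus"
proof -
  have step: "schottky_step (\<kappa> x) (\<kappa> (\<phi> u x)) (\<kappa> (\<phi> v x))" if "x \<in> E" for x
    using assms(3) that unfolding schottky_colouring_def by blast
  show "\<phi> u ` (P V_plus \<union> P V_minus \<union> P Base \<union> P U_plus) \<subseteq> P U_plus"
    using step act_closed[OF u] unfolding P_def schottky_step_def by fastforce
  show "\<phi> v ` (P U_plus \<union> P U_minus \<union> P V_plus) \<subseteq> P V_plus"
    using step act_closed[OF v] unfolding P_def schottky_step_def by fastforce
  have "\<forall>x\<in>E. \<phi> u x \<in> P V_plus \<union> P V_minus \<union> P Base \<union> P U_minus \<longrightarrow> x \<in> P U_minus"
    using step unfolding P_def schottky_step_def by fastforce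
  then show "\<phi> (inv u) ` (P V_plus \<union> P V_minus \<union> P Base \<union> P U_minus) \<subseteq> P U_minus"
    by (subst inv_image_subset_iff[OF u]) (auto simp: P_def)
  have "\<forall>x\<in>E. \<phi> v x \<in> P U_plus \<union> P U_minus \<union> P V_minus \<longrightarrow> x \<in> P V_minus"
    using step unfolding P_def schottky_step_def by fastforce
  then show "\<phi> (inv v) ` (P U_plus \<union> P U_minus \<union> P V_minus) \<subseteq> P V_minus"
    by (subst inv_image_subset_iff[OF v]) (auto simp: P_def)
qed

lemma (in group_action) schottky_colouring_nontrivial:
  assumes u: "u \<in> carrier G" and v: "v \<in> carrier G" and \<kappa>: "schottky_colouring E \<phi> u v \<kappa>"
  shows "u \<otimes> u \<noteq> \<one>" and "v \<noteq> \<one>"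
proof -
  define P where "P k = {x \<in> E. k \<in> \<kappa> x}" for k
  note subsets = schottky_colouring_image_subsets[OF u v \<kappa>, folded P_def]
  have P_E: "P k \<subseteq> E" for k
    by (auto simp: P_def)
  obtain x0 where x0: "x0 \<in> P Base" "x0 \<notin> P U_plus" "x0 \<notin> P U_minus"
    using \<kappa> unfolding schottky_colouring_def schottky_base_def P_def by blast
  have x0_E: "x0 \<in> E"
    using x0(1) P_E by blast
  have ux0: "\<phi> u x0 \<in> P U_plus"
    using subsets(1) x0(1) by blast
  show "u \<otimes> u \<noteq> \<one>"
  proof
    assume "u \<otimes> u = \<one>"
    have "\<phi> u (\<phi> u x0) = \<phi> (u \<otimes> u) x0"
      using composition_rule[OF x0_E u u] by simp
    also have "\<dots> = x0"
      using \<open>u \<otimes> u = \<one>\<close> act_one[OF x0_E] by simp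
    finally have "\<phi> u (\<phi> u x0) = x0" .
    moreover have "\<phi> u (\<phi> u x0) \<in> P U_plus"
      using subsets(1) ux0 by blast
    ultimately show False
      using x0(2) by simp
  qed
  show "v \<noteq> \<one>"
  proof
    assume "v = \<one>"
    then have "\<phi> v (\<phi> u x0) = \<phi> u x0"
      using act_one act_closed[OF u x0_E] by simp
    moreover have "\<phi> v (\<phi> u x0) \<in> P V_plus"
      using subsets(3) ux0 by blast
    ultimately have "\<phi> u x0 \<in> P V_plus"
      by simp
    then have "\<phi> (inv u) (\<phi> u x0) \<in> P U_minus"
      using subsets(2) by blast
    with x0(3) show False
      using act_inv_act[OF u x0_E] by simp
  qed
qed

theorem (in group_action) schottky_colouring_imp_pingpong:
  assumes u: "u \<in> carrier G" and v: "v \<in> carrier G" and \<kappa>: "schottky_colouring E \<phi> u v \<kappa>"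
  shows "pingpong_witness G E \<phi>"
proof -
  define P where "P k = {x \<in> E. k \<in> \<kappa> x}" for k
  note subsets = schottky_colouring_image_subsets[OF u v \<kappa>, folded P_def]
  have P_E: "P k \<subseteq> E" for k
    by (auto simp: P_def)
  obtain x0 where x0: "x0 \<in> P Base" "x0 \<notin> P U_plus" "x0 \<notin> P U_minus"
    using \<kappa> unfolding schottky_colouring_def schottky_base_def P_def by blast
  show ?thesis
  proof (intro pingpong_witnessI[where ?X1.0 = "P U_plus \<union> P U_minus"
        and ?X2.0 = "P V_plus \<union> P V_minus \<union> P Base"])
    show "group_action G E \<phi>"
      by (rule group_action_axioms)
    show "subgroup (generate G {u}) G" "subgroup (generate G {v}) G"
      using u v by (simp_all add: generate_is_subgroup)
    show "infinite (generate G {u}) \<or> card (generate G {u}) \<ge> 3"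
      using u schottky_colouring_nontrivial(1)[OF u v \<kappa>] by (rule generate_card_ge_3)
    show "infinite (generate G {v}) \<or> card (generate G {v}) \<ge> 2"
      using v schottky_colouring_nontrivial(2)[OF u v \<kappa>] by (rule generate_card_ge_2)
    show "P U_plus \<union> P U_minus \<subseteq> E" "P V_plus \<union> P V_minus \<union> P Base \<subseteq> E"
      using P_E by auto
    show "\<not> P V_plus \<union> P V_minus \<union> P Base \<subseteq> P U_plus \<union> P U_minus"
      using x0 by blast
    show "\<phi> \<gamma> ` (P V_plus \<union> P V_minus \<union> P Base) \<subseteq> P U_plus \<union> P U_minus"
      if "\<gamma> \<in> generate G {u}" "\<gamma> \<noteq> \<one>" for \<gamma>
      using P_E by (intro generate_image_subset[OF u _ subsets(1,2) that]) auto
    show "\<phi> \<gamma> ` (P U_plus \<union> P U_minus) \<subseteq> P V_plus \<union> P V_minus \<union> P Base"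
      if "\<gamma> \<in> generate G {v}" "\<gamma> \<noteq> \<one>" for \<gamma>
    proof -
      have "\<phi> \<gamma> ` (P U_plus \<union> P U_minus) \<subseteq> P V_plus \<union> P V_minus"
        using P_E by (intro generate_image_subset[OF v _ subsets(3,4) that]) auto
      then show ?thesis
        by blast
    qed
  qed
qed

lemma (in group_action) schottky_colouring_conjugate:
  assumes u: "u \<in> carrier G" and b: "b \<in> carrier G"
    and X: "X1 \<subseteq> E" "X2 \<subseteq> E" "\<not> X2 \<subseteq> X1" and U: "Up \<union> Um \<subseteq> X1"
    and u_Up: "\<phi> u ` (X2 \<union> Up) \<subseteq> Up" and u_Um: "\<phi> (inv u) ` (X2 \<union> Um) \<subseteq> Um"
    and b_X1: "\<phi> b ` X1 \<subseteq> X2" and inv_b_X1: "\<phi> (inv b) ` X1 \<subseteq> X2"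
  obtains \<kappa> where "schottky_colouring E \<phi> u (b \<otimes> u \<otimes> inv b) \<kappa>"
proof -
  have bU: "\<phi> b ` Up \<union> \<phi> b ` Um \<subseteq> X2"
    using U b_X1 by blast
  have X1_b: "X1 \<subseteq> \<phi> b ` X2"
  proof
    fix x assume x: "x \<in> X1"
    then have "\<phi> b (\<phi> (inv b) x) = x"
      using act_act_inv b X(1) by blast
    moreover have "\<phi> (inv b) x \<in> X2"
      using inv_b_X1 x by blast
    ultimately show "x \<in> \<phi> b ` X2"
      by (metis image_eqI)
  qed
  have v_Vp: "\<phi> (b \<otimes> u \<otimes> inv b) ` \<phi> b ` (X2 \<union> Up) \<subseteq> \<phi> b ` Up"
    using u b X(2) U X(1) u_Up by (intro conj_image_subset) auto
  have "\<phi> (b \<otimes> inv u \<otimes> inv b) ` \<phi> b ` (X2 \<union> Um) \<subseteq> \<phi> b ` Um"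
    using u b X(2) U X(1) u_Um by (intro conj_image_subset) auto
  moreover have "inv (b \<otimes> u \<otimes> inv b) = b \<otimes> inv u \<otimes> inv b"
    using u b by (simp add: inv_mult_group m_assoc)
  ultimately have v_Vm: "\<phi> (inv (b \<otimes> u \<otimes> inv b)) ` \<phi> b ` (X2 \<union> Um) \<subseteq> \<phi> b ` Um"
    by simp
  have "schottky_colouring E \<phi> u (b \<otimes> u \<otimes> inv b) (\<lambda>x. {k. x \<in> (case k of
    U_plus \<Rightarrow> Up | U_minus \<Rightarrow> Um | V_plus \<Rightarrow> \<phi> b ` Up | V_minus \<Rightarrow> \<phi> b ` Um | Base \<Rightarrow> X2)})"
  proof (rule schottky_colouringI)
    show "u \<in> carrier G" "b \<otimes> u \<otimes> inv b \<in> carrier G"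
      using u b by auto
    show "Up \<union> Um \<union> \<phi> b ` Up \<union> \<phi> b ` Um \<union> X2 \<subseteq> E"
      using U X bU by auto
    show "\<phi> u ` (\<phi> b ` Up \<union> \<phi> b ` Um \<union> X2 \<union> Up) \<subseteq> Up"
      using bU by (intro subset_trans[OF image_mono u_Up]) auto
    show "\<phi> (inv u) ` (\<phi> b ` Up \<union> \<phi> b ` Um \<union> X2 \<union> Um) \<subseteq> Um"
      using bU by (intro subset_trans[OF image_mono u_Um]) auto
    show "\<phi> (b \<otimes> u \<otimes> inv b) ` (Up \<union> Um \<union> \<phi> b ` Up) \<subseteq> \<phi> b ` Up"
      using U X1_b by (intro subset_trans[OF image_mono v_Vp]) auto
    show "\<phi> (inv (b \<otimes> u \<otimes> inv b)) ` (Up \<union> Um \<union> \<phi> b ` Um) \<subseteq> \<phi> b ` Um"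
      using U X1_b by (intro subset_trans[OF image_mono v_Vm]) auto
    show "\<not> X2 \<subseteq> Up \<union> Um"
      using U X(3) by blast
  qed
  then show thesis
    by (rule that)
qed

theorem (in group_action) pingpong_imp_schottky_colouring:
  assumes "pingpong_witness G E \<phi>"
  obtains u v \<kappa> where "u \<in> carrier G" "v \<in> carrier G" "schottky_colouring E \<phi> u v \<kappa>"
proof -
  obtain \<Gamma>1 \<Gamma>2 X1 X2 where \<Gamma>: "subgroup \<Gamma>1 G" "subgroup \<Gamma>2 G"
      "infinite \<Gamma>1 \<or> card \<Gamma>1 \<ge> 3" "infinite \<Gamma>2 \<or> card \<Gamma>2 \<ge> 2"
    and X: "X1 \<subseteq> E" "X2 \<subseteq> E" "\<not> X2 \<subseteq> X1"
    and ping: "\<And>\<gamma>. \<gamma> \<in> \<Gamma>1 \<Longrightarrow> \<gamma> \<noteq> \<one> \<Longrightarrow> \<phi> \<gamma> ` X2 \<subseteq> X1"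
    and pong: "\<And>\<gamma>. \<gamma> \<in> \<Gamma>2 \<Longrightarrow> \<gamma> \<noteq> \<one> \<Longrightarrow> \<phi> \<gamma> ` X1 \<subseteq> X2"
    using assms by (rule pingpong_witnessE) blast
  have inv_ping: "\<phi> (inv \<gamma>) ` X2 \<subseteq> X1" if "\<gamma> \<in> \<Gamma>1" "\<gamma> \<noteq> \<one>" for \<gamma>
    using that subgroup.mem_carrier[OF \<Gamma>(1)] by (intro ping subgroup.m_inv_closed[OF \<Gamma>(1)]) auto
  have inv_pong: "\<phi> (inv \<gamma>) ` X1 \<subseteq> X2" if "\<gamma> \<in> \<Gamma>2" "\<gamma> \<noteq> \<one>" for \<gamma>
    using that subgroup.mem_carrier[OF \<Gamma>(2)] by (intro pong subgroup.m_inv_closed[OF \<Gamma>(2)]) auto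
  obtain a c where ac: "a \<in> \<Gamma>1" "c \<in> \<Gamma>1" "a \<noteq> \<one>" "c \<noteq> \<one>" "c \<otimes> a \<noteq> \<one>"
    using \<Gamma>(1,3) by (rule subgroup_card_ge_3E)
  have "\<not> \<Gamma>2 \<subseteq> {\<one>}"
    using \<Gamma>(4) by (intro card_less_imp_not_subset) auto
  then obtain b where b: "b \<in> \<Gamma>2" "b \<noteq> \<one>"
    by blast
  have carrier: "a \<in> carrier G" "b \<in> carrier G" "c \<in> carrier G"
    using subgroup.mem_carrier[OF \<Gamma>(1) ac(1)] subgroup.mem_carrier[OF \<Gamma>(2) b(1)]
      subgroup.mem_carrier[OF \<Gamma>(1) ac(2)] by simp_all
  have ca: "c \<otimes> a \<in> \<Gamma>1"
    using ac by (intro subgroup.m_closed[OF \<Gamma>(1)])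
  define u where "u = a \<otimes> b \<otimes> c"
  have u: "u \<in> carrier G"
    unfolding u_def using carrier by simp
  have u_attr: "\<phi> u ` (X2 \<union> \<phi> a ` X2) \<subseteq> \<phi> a ` X2"
    unfolding u_def
    using carrier X(2) ping[OF ac(2,4)] ping[OF ca ac(5)] pong[OF b]
    by (rule pingpong_attracting_image)
  have inv_u_attr: "\<phi> (inv u) ` (X2 \<union> \<phi> (inv c) ` X2) \<subseteq> \<phi> (inv c) ` X2"
  proof -
    have "\<phi> (inv a \<otimes> inv c) ` X2 \<subseteq> X1"
      using inv_ping[OF ca ac(5)] carrier by (simp add: inv_mult_group)
    then have "\<phi> (inv c \<otimes> inv b \<otimes> inv a) ` (X2 \<union> \<phi> (inv c) ` X2) \<subseteq> \<phi> (inv c) ` X2"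
      using carrier X(2) inv_ping[OF ac(1,3)] inv_pong[OF b]
      by (intro pingpong_attracting_image) simp_all
    moreover have "inv u = inv c \<otimes> inv b \<otimes> inv a"
      unfolding u_def using carrier by (simp add: inv_mult_group m_assoc)
    ultimately show ?thesis
      by simp
  qed
  have attr_X1: "\<phi> a ` X2 \<union> \<phi> (inv c) ` X2 \<subseteq> X1"
    using ping[OF ac(1,3)] inv_ping[OF ac(2,4)] by blast
  obtain \<kappa> where "schottky_colouring E \<phi> u (b \<otimes> u \<otimes> inv b) \<kappa>"
    using schottky_colouring_conjugate[OF u carrier(2) X attr_X1 u_attr inv_u_attr pong[OF b]
        inv_pong[OF b]] .
  moreover have "b \<otimes> u \<otimes> inv b \<in> carrier G"
    using u carrier(2) by simp
  ultimately show thesis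
    using u that by blast
qed

lemma (in group_action) schottky_colouring_orbit:
  assumes u: "u \<in> carrier G" and v: "v \<in> carrier G" and \<kappa>: "schottky_colouring E \<phi> u v \<kappa>"
  obtains \<kappa>' where "schottky_colouring (carrier G) (left_translation G) u v \<kappa>'"
proof -
  obtain x0 where x0: "x0 \<in> E" "schottky_base (\<kappa> x0)"
    using \<kappa> unfolding schottky_colouring_def by blast
  have "schottky_colouring (carrier G) (left_translation G) u v (\<lambda>g. \<kappa> (\<phi> g x0))"
    unfolding schottky_colouring_def
  proof (intro conjI ballI bexI)
    fix g assume g: "g \<in> carrier G"
    have "\<phi> (left_translation G u g) x0 = \<phi> u (\<phi> g x0)"
      "\<phi> (left_translation G v g) x0 = \<phi> v (\<phi> g x0)"
      using g u v x0(1) composition_rule by (simp_all add: left_translation_def)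
    moreover have "\<phi> g x0 \<in> E"
      using g x0(1) by (rule act_closed)
    ultimately show "schottky_step (\<kappa> (\<phi> g x0)) (\<kappa> (\<phi> (left_translation G u g) x0))
        (\<kappa> (\<phi> (left_translation G v g) x0))"
      using \<kappa> unfolding schottky_colouring_def by simp
  next
    show "schottky_base (\<kappa> (\<phi> \<one> x0))"
      using act_one x0 by simp
  qed simp
  then show thesis
    by (rule that)
qed

section \<open>Local patterns\<close>

text \<open>Blocks are numbered from 1, as the entries of the configurations in Con_tuple.\<close>

definition block_index :: "'a set list \<Rightarrow> 'a \<Rightarrow> nat" where
  "block_index Es x = Suc (THE i. i < length Es \<and> x \<in> Es ! i)"

lemma block_index_eqI:
  assumes "is_fin_partition S Es" "i < length Es" "x \<in> Es ! i"
  shows "block_index Es x = Suc i"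
proof -
  have "(THE i. i < length Es \<and> x \<in> Es ! i) = i"
  proof (rule the_equality)
    show "i < length Es \<and> x \<in> Es ! i"
      using assms(2,3) ..
    show "j = i" if "j < length Es \<and> x \<in> Es ! j" for j
      using assms that unfolding is_fin_partition_def by blast
  qed
  then show ?thesis
    unfolding block_index_def by simp
qed

lemma block_indexE:
  assumes "is_fin_partition S Es" "x \<in> S"
  obtains i where "i < length Es" "x \<in> Es ! i" "block_index Es x = Suc i"
proof -
  obtain i where "i < length Es" "x \<in> Es ! i"
    using assms unfolding is_fin_partition_def by (metis UnionE in_set_conv_nth)
  with block_index_eqI[OF assms(1)] that show thesis
    by blast
qed

lemma block_index_iff:
  assumes "is_fin_partition S Es" "x \<in> S"
  shows "1 \<le> c \<and> c \<le> length Es \<and> x \<in> Es ! (c - 1) \<longleftrightarrow> c = block_index Es x"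
proof
  assume c: "1 \<le> c \<and> c \<le> length Es \<and> x \<in> Es ! (c - 1)"
  then have "block_index Es x = Suc (c - 1)"
    by (intro block_index_eqI[OF assms(1)]) auto
  with c show "c = block_index Es x"
    by simp
next
  assume "c = block_index Es x"
  with assms show "1 \<le> c \<and> c \<le> length Es \<and> x \<in> Es ! (c - 1)"
    by (elim block_indexE) auto
qed

lemma is_fin_partition_fibres:
  assumes "distinct L" "set L = f ` A"
  shows "is_fin_partition A (map (\<lambda>t. {x \<in> A. f x = t}) L)"
  unfolding is_fin_partition_def
proof (intro conjI allI impI)
  show "\<Union> (set (map (\<lambda>t. {x \<in> A. f x = t}) L)) = A"
    using assms(2) by auto
  show "map (\<lambda>t. {x \<in> A. f x = t}) L ! i \<noteq> {}"
    if "i < length (map (\<lambda>t. {x \<in> A. f x = t}) L)" for i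
    using that assms(2) nth_mem[of i L] by force
  show "map (\<lambda>t. {x \<in> A. f x = t}) L ! i \<inter> map (\<lambda>t. {x \<in> A. f x = t}) L ! j = {}"
    if "i < length (map (\<lambda>t. {x \<in> A. f x = t}) L)"
      "j < length (map (\<lambda>t. {x \<in> A. f x = t}) L)" "i \<noteq> j" for i j
    using that assms(1) by (auto simp: nth_eq_iff_index_eq)
qed

definition local_patterns ::
  "('a, 'm) monoid_scheme \<Rightarrow> ('a \<Rightarrow> 't) \<Rightarrow> 'a list \<Rightarrow> 't list set" where
  "local_patterns G f gs = (\<lambda>x. map f (x # map (\<lambda>g. g \<otimes>\<^bsub>G\<^esub> x) gs)) ` carrier G"

lemma local_patterns_comp: "local_patterns G (h \<circ> f) gs = map h ` local_patterns G f gs"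
  unfolding local_patterns_def by (simp add: image_image o_def)

lemma local_patterns_cong:
  assumes "monoid G" "set gs \<subseteq> carrier G" "\<And>x. x \<in> carrier G \<Longrightarrow> f x = f' x"
  shows "local_patterns G f gs = local_patterns G f' gs"
  unfolding local_patterns_def
proof (rule image_cong[OF refl])
  fix x assume x: "x \<in> carrier G"
  have "set (x # map (\<lambda>g. g \<otimes>\<^bsub>G\<^esub> x) gs) \<subseteq> carrier G"
    using assms(1,2) x monoid.m_closed by fastforce
  then show "map f (x # map (\<lambda>g. g \<otimes>\<^bsub>G\<^esub> x) gs) = map f' (x # map (\<lambda>g. g \<otimes>\<^bsub>G\<^esub> x) gs)"
    by (intro list.map_cong0 assms(3)) blast
qed

lemma Con_tuple_subset_local_patterns:
  assumes G: "monoid G" and Es: "is_fin_partition (carrier G) Es" and gs: "set gs \<subseteq> carrier G"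
    and Con: "C \<in> Con_tuple G gs Es"
  shows "C \<in> local_patterns G (block_index Es) gs"
proof -
  have closed: "gs ! i \<otimes>\<^bsub>G\<^esub> x \<in> carrier G" if "x \<in> carrier G" "i < length gs" for x i
    using that gs by (intro monoid.m_closed[OF G]) auto
  have "length C = length gs + 1 \<and> (\<forall>j<length C. 1 \<le> C ! j \<and> C ! j \<le> length Es) \<and>
    (\<exists>x\<in>carrier G. x \<in> Es ! (C ! 0 - 1) \<and>
       (\<forall>i<length gs. gs ! i \<otimes>\<^bsub>G\<^esub> x \<in> Es ! (C ! Suc i - 1)))"
    using Con unfolding Con_tuple_def by (rule CollectD)
  then obtain x where x: "x \<in> carrier G" and len: "length C = Suc (length gs)"
    and bounds: "\<forall>j<length C. 1 \<le> C ! j \<and> C ! j \<le> length Es"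
    and C0: "x \<in> Es ! (C ! 0 - 1)"
    and CSuc: "\<forall>i<length gs. gs ! i \<otimes>\<^bsub>G\<^esub> x \<in> Es ! (C ! Suc i - 1)"
    by auto
  have "C ! j = map (block_index Es) (x # map (\<lambda>g. g \<otimes>\<^bsub>G\<^esub> x) gs) ! j"
    if "j < length C" for j
  proof (cases j)
    case 0
    then have "C ! 0 = block_index Es x"
      using bounds that C0 block_index_iff[OF Es x] by blast
    with 0 show ?thesis
      by simp
  next
    case (Suc i)
    then have i: "i < length gs"
      using that len by simp
    then have "C ! Suc i = block_index Es (gs ! i \<otimes>\<^bsub>G\<^esub> x)"
      using bounds that CSuc Suc block_index_iff[OF Es closed[OF x i]] by blast
    with Suc i show ?thesis
      by simp
  qed
  then have "C = map (block_index Es) (x # map (\<lambda>g. g \<otimes>\<^bsub>G\<^esub> x) gs)"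
    using len by (intro nth_equalityI) auto
  with x show ?thesis
    unfolding local_patterns_def by blast
qed

lemma local_patterns_subset_Con_tuple:
  assumes G: "monoid G" and Es: "is_fin_partition (carrier G) Es" and gs: "set gs \<subseteq> carrier G"
    and pat: "C \<in> local_patterns G (block_index Es) gs"
  shows "C \<in> Con_tuple G gs Es"
proof -
  have closed: "gs ! i \<otimes>\<^bsub>G\<^esub> x \<in> carrier G" if "x \<in> carrier G" "i < length gs" for x i
    using that gs by (intro monoid.m_closed[OF G]) auto
  obtain x where x: "x \<in> carrier G"
    and C: "C = map (block_index Es) (x # map (\<lambda>g. g \<otimes>\<^bsub>G\<^esub> x) gs)"
    using pat unfolding local_patterns_def by blast
  have "1 \<le> C ! j \<and> C ! j \<le> length Es \<and>
      (x # map (\<lambda>g. g \<otimes>\<^bsub>G\<^esub> x) gs) ! j \<in> Es ! (C ! j - 1)"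
    if "j < Suc (length gs)" for j
  proof (cases j)
    case 0
    then have "C ! j = block_index Es x"
      using C by simp
    with 0 show ?thesis
      using block_index_iff[OF Es x] by simp
  next
    case (Suc i)
    then have i: "i < length gs"
      using that by simp
    then have "C ! j = block_index Es (gs ! i \<otimes>\<^bsub>G\<^esub> x)"
      using C Suc by simp
    with Suc i show ?thesis
      using block_index_iff[OF Es closed[OF x i]] by simp
  qed
  then show ?thesis
    unfolding Con_tuple_def using x C by (fastforce simp: All_less_Suc2)
qed

lemma Con_tuple_eq_local_patterns:
  assumes G: "monoid G" and Es: "is_fin_partition (carrier G) Es" and gs: "set gs \<subseteq> carrier G"
  shows "Con_tuple G gs Es = local_patterns G (block_index Es) gs"
  using Con_tuple_subset_local_patterns[OF assms] local_patterns_subset_Con_tuple[OF assms]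
  by blast

theorem Con_eq_imp_local_patterns:
  assumes G: "monoid G" and H: "monoid H" and Con: "Con G = Con H"
    and gs: "set gs \<subseteq> carrier G" and fin: "finite (f ` carrier G)"
  obtains hs f' where "set hs \<subseteq> carrier H" "local_patterns H f' hs = local_patterns G f gs"
proof -
  obtain L where L: "set L = f ` carrier G" "distinct L"
    using finite_distinct_list[OF fin] by blast
  define Es where "Es = map (\<lambda>t. {x \<in> carrier G. f x = t}) L"
  have Es: "is_fin_partition (carrier G) Es"
    unfolding Es_def using L(2,1) by (rule is_fin_partition_fibres)
  have "Con_tuple G gs Es \<in> Con G"
    unfolding Con_def using gs Es by blast
  then have "Con_tuple G gs Es \<in> Con H"
    by (simp only: Con)
  then obtain hs Fs where hs: "set hs \<subseteq> carrier H" and Fs: "is_fin_partition (carrier H) Fs"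
    and eq: "Con_tuple H hs Fs = Con_tuple G gs Es"
    unfolding Con_def by blast
  define lookup where "lookup i = L ! (i - 1)" for i
  have f_eq: "f x = lookup (block_index Es x)" if x: "x \<in> carrier G" for x
  proof -
    obtain i where "i < length Es" "x \<in> Es ! i" "block_index Es x = Suc i"
      using Es x by (rule block_indexE)
    then show ?thesis
      unfolding lookup_def Es_def by simp
  qed
  have "local_patterns G f gs = local_patterns G (lookup \<circ> block_index Es) gs"
    using f_eq by (intro local_patterns_cong[OF G gs]) simp
  also have "\<dots> = map lookup ` local_patterns G (block_index Es) gs"
    by (rule local_patterns_comp)
  also have "\<dots> = map lookup ` local_patterns H (block_index Fs) hs"
    unfolding Con_tuple_eq_local_patterns[OF G Es gs, symmetric]
      Con_tuple_eq_local_patterns[OF H Fs hs, symmetric] eq ..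
  also have "\<dots> = local_patterns H (lookup \<circ> block_index Fs) hs"
    by (rule local_patterns_comp[symmetric])
  finally show thesis
    using that hs by simp
qed

lemma schottky_colouring_left_translation_iff:
  "schottky_colouring (carrier G) (left_translation G) u v \<kappa> \<longleftrightarrow>
     (\<forall>p\<in>local_patterns G \<kappa> [u, v]. schottky_step (p ! 0) (p ! 1) (p ! 2)) \<and>
     (\<exists>p\<in>local_patterns G \<kappa> [u, v]. schottky_base (p ! 0))"
  unfolding schottky_colouring_def local_patterns_def left_translation_def by auto

theorem schottky_colouring_transfer:
  assumes G: "monoid G" and H: "monoid H" and Con: "Con G = Con H"
    and u: "u \<in> carrier G" and v: "v \<in> carrier G"
    and \<kappa>: "schottky_colouring (carrier G) (left_translation G) u v \<kappa>"
  obtains u' v' \<kappa>' where "u' \<in> carrier H" "v' \<in> carrier H"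
    "schottky_colouring (carrier H) (left_translation H) u' v' \<kappa>'"
proof -
  obtain hs \<kappa>' where hs: "set hs \<subseteq> carrier H"
    and eq: "local_patterns H \<kappa>' hs = local_patterns G \<kappa> [u, v]"
    using Con_eq_imp_local_patterns[OF G H Con, of "[u, v]" \<kappa>] u v by auto
  have "map \<kappa>' (\<one>\<^bsub>H\<^esub> # map (\<lambda>g. g \<otimes>\<^bsub>H\<^esub> \<one>\<^bsub>H\<^esub>) hs) \<in> local_patterns H \<kappa>' hs"
    unfolding local_patterns_def using monoid.one_closed[OF H] by blast
  then have "map \<kappa>' (\<one>\<^bsub>H\<^esub> # map (\<lambda>g. g \<otimes>\<^bsub>H\<^esub> \<one>\<^bsub>H\<^esub>) hs) \<in> local_patterns G \<kappa> [u, v]"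
    by (simp only: eq)
  then obtain x where "map \<kappa>' (\<one>\<^bsub>H\<^esub> # map (\<lambda>g. g \<otimes>\<^bsub>H\<^esub> \<one>\<^bsub>H\<^esub>) hs)
      = map \<kappa> (x # map (\<lambda>g. g \<otimes>\<^bsub>G\<^esub> x) [u, v])"
    unfolding local_patterns_def by blast
  then have "length hs = 2"
    by (auto dest: arg_cong[where f = length])
  then obtain u' v' where hs_eq: "hs = [u', v']"
    by (auto simp: numeral_2_eq_2 length_Suc_conv)
  show thesis
  proof (rule that)
    show "u' \<in> carrier H" "v' \<in> carrier H"
      using hs hs_eq by auto
    show "schottky_colouring (carrier H) (left_translation H) u' v' \<kappa>'"
      using \<kappa> eq hs_eq by (simp add: schottky_colouring_left_translation_iff)
  qed
qed

theorem mainTheorem10: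
  fixes G :: "('a, 'c) monoid_scheme" and H :: "('b, 'd) monoid_scheme"
    and X :: "'x set" and \<phi> :: "'a \<Rightarrow> 'x \<Rightarrow> 'x"
  assumes "group G" and "group H"
    and "Con G = Con H"
    and "pingpong_witness G X \<phi>"
  shows "\<exists>(Y :: 'b set set) \<psi>. pingpong_witness H Y \<psi>"
proof -
  interpret G: group_action G X \<phi>
    using assms(4) unfolding pingpong_witness_def by blast
  obtain u v \<kappa> where uv: "u \<in> carrier G" "v \<in> carrier G"
    and \<kappa>: "schottky_colouring X \<phi> u v \<kappa>"
    using assms(4) by (rule G.pingpong_imp_schottky_colouring)
  obtain \<kappa>G where \<kappa>G: "schottky_colouring (carrier G) (left_translation G) u v \<kappa>G"
    using G.schottky_colouring_orbit[OF uv \<kappa>] .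
  obtain u' v' \<kappa>H where "u' \<in> carrier H" "v' \<in> carrier H"
    and "schottky_colouring (carrier H) (left_translation H) u' v' \<kappa>H"
    using schottky_colouring_transfer[OF group.is_monoid[OF assms(1)] group.is_monoid[OF assms(2)]
        assms(3) uv \<kappa>G] .
  then have "pingpong_witness H (carrier H) (left_translation H)"
    by (intro group_action.schottky_colouring_imp_pingpong
        [OF group.group_action_left_translation[OF assms(2)]])
  \<comment> \<open>The required H-set has type 'b set: pass to singletons.\<close>
  then show ?thesis
    using pingpong_witness_Pow by blast
qed

end
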